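(* Let $n\ge2$, let $a_1,\dots,a_n$ be real numbers, $C(t)=\sum_{j=1}^n a_j\cos jt$, $S(t)=\sum_{j=1}^n a_j\sin jt$, and suppose $S(t_1)=0$ with $t_1\in(0,\pi)$. Define $a^{(1)}_1,\dots,a^{(1)}_{n-1}$ by setting $a^{(1)}_n=a^{(1)}_{n+1}=0$ and, for $k=n,n-1,\dots,2$ (in this order), $$a^{(1)}_{k-1}=2a_k+2\cos t_1\, a^{(1)}_k-a^{(1)}_{k+1}.$$ Then $C(t_1)=-\dfrac{a^{(1)}_1}{2}$.
   Context: The recursion expresses $a^{(1)}_1,\dots,a^{(1)}_{n-1}$ uniquely in terms of $a_2,\dots,a_n$ and $\cos t_1$; it is equivalent to the equations $a_k=\tfrac12a^{(1)}_{k-1}-\cos t_1\,a^{(1)}_k+\tfrac12a^{(1)}_{k+1}$ for $k=2,\dots,n$ (with $a^{(1)}_n=a^{(1)}_{n+1}=0$). *)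

theory Defs
  imports Complex_Main
begin

text \<open>Downward recursion. aux a n c m is the coefficient a^(1)_{n+1-m}, for m = 0,1,...:
  m = 0, 1 give a^(1)_{n+1} = a^(1)_n = 0, and for m \<ge> 2 (k = n+2-m)
  a^(1)_{k-1} = 2 a_k + 2 c a^(1)_k - a^(1)_{k+1}.\<close>
fun coef1_aux :: "(nat \<Rightarrow> real) \<Rightarrow> nat \<Rightarrow> real \<Rightarrow> nat \<Rightarrow> real" where
  "coef1_aux a n c 0 = 0"
| "coef1_aux a n c (Suc 0) = 0"
| "coef1_aux a n c (Suc (Suc m)) =
     2 * a (n - m) + 2 * c * coef1_aux a n c (Suc m) - coef1_aux a n c m"

definition coef1 :: "(nat \<Rightarrow> real) \<Rightarrow> nat \<Rightarrow> real \<Rightarrow> nat \<Rightarrow> real" where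
  "coef1 a n t1 k = coef1_aux a n (cos t1) (n + 1 - k)"

end

theory Submission
  imports Defs
begin

text \<open>Both sin and cos satisfy g(x + t) + g(x - t) = 2 cos t g(x), and the recursion defining
  b_k = a^(1)_k is exactly what makes Abel summation of sum_j a_j g(jt) against this three-term
  relation telescope: 2 sum_j a_j g(jt) = b_0 g(t) - b_1 g(0). For g = sin this reads
  2 S(t) = b_0 sin t, so S(t_1) = 0 with sin t_1 > 0 forces b_0 = 0; for g = cos it then reads
  2 C(t_1) = - b_1.\<close>

lemma coef1_aux_Abel_summation:
  fixes a :: "nat \<Rightarrow> real" and g :: "real \<Rightarrow> real"
  assumes g: "\<And>x. g (x + t) + g (x - t) = 2 * cos t * g x"
    and "m < n"
  shows "2 * (\<Sum>j=n-m..n. a j * g (real j * t)) =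
           coef1_aux a n (cos t) (Suc (Suc m)) * g (real (n - m) * t)
         - coef1_aux a n (cos t) (Suc m) * g ((real (n - m) - 1) * t)"
  using \<open>m < n\<close>
proof (induction m)
  case 0
  then show ?case by simp
next
  case (Suc m)
  let ?b = "coef1_aux a n (cos t)"
  define x where "x = (real n - real m - 1) * t"
  have n_m: "real (n - m) = real n - real m" "real (n - Suc m) = real n - real m - 1"
    using Suc.prems by auto
  have split: "{n - Suc m..n} = insert (n - Suc m) {n - m..n}"
    using Suc.prems by auto
  have three_term: "g (x + t) = 2 * cos t * g x - g (x - t)"
    using g[of x] by simp
  have "2 * (\<Sum>j=n - Suc m..n. a j * g (real j * t))
        = 2 * a (n - Suc m) * g x + 2 * (\<Sum>j=n-m..n. a j * g (real j * t))"
    unfolding split using Suc.prems by (simp add: n_m x_def algebra_simps)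
  also have "\<dots> = 2 * a (n - Suc m) * g x + ?b (Suc (Suc m)) * g (x + t) - ?b (Suc m) * g x"
    using Suc by (simp add: n_m x_def algebra_simps)
  also have "\<dots> = (2 * a (n - Suc m) + 2 * cos t * ?b (Suc (Suc m)) - ?b (Suc m)) * g x
                 - ?b (Suc (Suc m)) * g (x - t)"
    unfolding three_term by (simp add: algebra_simps del: coef1_aux.simps)
  finally show ?case
    using Suc.prems by (simp add: n_m x_def algebra_simps)
qed

lemma coef1_Abel_summation:
  fixes a :: "nat \<Rightarrow> real" and g :: "real \<Rightarrow> real"
  assumes "\<And>x. g (x + t) + g (x - t) = 2 * cos t * g x" and "n \<ge> 1"
  shows "2 * (\<Sum>j=1..n. a j * g (real j * t)) = coef1 a n t 0 * g t - coef1 a n t 1 * g 0"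
proof -
  have "n - 1 < n" "n - (n - 1) = 1" "Suc (Suc (n - 1)) = n + 1" "Suc (n - 1) = n"
    using \<open>n \<ge> 1\<close> by auto
  then show ?thesis
    using coef1_aux_Abel_summation[of g t "n - 1" n a] assms(1)
    by (simp add: coef1_def)
qed

theorem corollary1:
  fixes a :: "nat \<Rightarrow> real" and n :: nat and t1 :: real
  assumes "n \<ge> 2"
    and "(\<Sum>j=1..n. a j * sin (real j * t1)) = 0"
    and "0 < t1" and "t1 < pi"
  shows "(\<Sum>j=1..n. a j * cos (real j * t1)) = - coef1 a n t1 1 / 2"
proof -
  have n: "n \<ge> 1" using assms(1) by simp
  have S: "2 * (\<Sum>j=1..n. a j * sin (real j * t1)) = coef1 a n t1 0 * sin t1"
    using coef1_Abel_summation[of sin t1 n a, OF _ n] by (simp add: sin_add sin_diff)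
  have C: "2 * (\<Sum>j=1..n. a j * cos (real j * t1)) = coef1 a n t1 0 * cos t1 - coef1 a n t1 1"
    using coef1_Abel_summation[of cos t1 n a, OF _ n] by (simp add: cos_add cos_diff)
  have "sin t1 > 0" using assms(3,4) by (simp add: sin_gt_zero)
  then have "coef1 a n t1 0 = 0" using S assms(2) by simp
  then show ?thesis using C by simp
qed

end
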